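(* Let $\rho_0\in(0,\pi/2)$ and $Q\in SO_3(\mathbb R)$. If $\bar L_i>\bar D_j$ for all $i,j\in\{1,2\}$, then $\bar L_1=\bar L_2$. If $\bar D_i>\bar L_j$ for all $i,j\in\{1,2\}$, then $\bar D_1=\bar D_2$.
   Context: $d$ is the spherical distance on the unit sphere $\mathbb S^2\subset\mathbb R^3$. $p_1=(\cos\rho_0,0,\sin\rho_0)$, $p_2=(\cos\rho_0,0,-\sin\rho_0)$, $q_1=Qp_1$, $q_2=Qp_2$; $L_1=d(p_1,q_1)$, $L_2=d(p_2,q_2)$, $D_1=d(p_1,q_2)$, $D_2=d(p_2,q_1)$; $\bar L_i=2\lceil L_i/(4\rho_0)\rceil-3$ and $\bar D_i=2\lceil D_i/(4\rho_0)-1/2\rceil-2$ for $i=1,2$. *)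

theory Defs
  imports "HOL-Analysis.Analysis"
begin

definition sph_dist :: "real^3 \<Rightarrow> real^3 \<Rightarrow> real" where
  "sph_dist x y = arccos (x \<bullet> y)"

definition SO3 :: "(real^3^3) set" where
  "SO3 = {Q. orthogonal_matrix Q \<and> det Q = 1}"

definition p1 :: "real \<Rightarrow> real^3" where
  "p1 \<rho>0 = vector [cos \<rho>0, 0, sin \<rho>0]"

definition p2 :: "real \<Rightarrow> real^3" where
  "p2 \<rho>0 = vector [cos \<rho>0, 0, - sin \<rho>0]"

definition Lbar :: "real \<Rightarrow> real \<Rightarrow> int" where
  "Lbar \<rho>0 L = 2 * \<lceil>L / (4 * \<rho>0)\<rceil> - 3"

definition Dbar :: "real \<Rightarrow> real \<Rightarrow> int" where
  "Dbar \<rho>0 D = 2 * \<lceil>D / (4 * \<rho>0) - 1/2\<rceil> - 2"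

end

theory Submission
  imports Defs
begin

text \<open>All four distances L1, L2, D1, D2 are within 2\<rho>0 of each other pairwise across the
  two families, since d(p1, p2) = d(q1, q2) = 2\<rho>0 and the spherical distance satisfies the
  triangle inequality. After scaling by 1/(4\<rho>0) an L-value and a D-value thus differ by at
  most 1/2, which is exactly the slack absorbed by the offset 1/2 in the definition of Dbar:
  if Lbar L exceeds Dbar D, no L-value within 2\<rho>0 of D can have a larger Lbar, and
  symmetrically for Dbar.\<close>

lemma arccos_inner_triangle:
  fixes x y z :: "'a::real_inner"
  assumes "norm x = 1" and "norm y = 1" and "norm z = 1"
  shows "arccos (x \<bullet> z) \<le> arccos (x \<bullet> y) + arccos (y \<bullet> z)"
proof -
  define a where "a = x \<bullet> y"
  define c where "c = y \<bullet> z"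
  have a_bound: "\<bar>a\<bar> \<le> 1" and c_bound: "\<bar>c\<bar> \<le> 1" and xz_bound: "\<bar>x \<bullet> z\<bar> \<le> 1"
    unfolding a_def c_def using Cauchy_Schwarz_ineq2[of x y] Cauchy_Schwarz_ineq2[of y z]
      Cauchy_Schwarz_ineq2[of x z] assms by simp_all
  have unit: "x \<bullet> x = 1" "y \<bullet> y = 1" "z \<bullet> z = 1"
    using assms by (simp_all add: norm_eq_sqrt_inner)
  \<comment> \<open>Cauchy-Schwarz for the components of x and z orthogonal to y.\<close>
  define u where "u = x - a *\<^sub>R y"
  define w where "w = z - c *\<^sub>R y"
  have "u \<bullet> w = x \<bullet> z - a * c"
    unfolding u_def w_def
    by (simp add: a_def c_def unit inner_commute algebra_simps)
  moreover have "norm u = sqrt (1 - a\<^sup>2)" and "norm w = sqrt (1 - c\<^sup>2)"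
    unfolding u_def w_def norm_eq_sqrt_inner
    by (simp_all add: a_def c_def unit inner_commute algebra_simps power2_eq_square)
  ultimately have "\<bar>x \<bullet> z - a * c\<bar> \<le> sqrt (1 - a\<^sup>2) * sqrt (1 - c\<^sup>2)"
    using Cauchy_Schwarz_ineq2[of u w] by simp
  then have inner_lower: "cos (arccos a + arccos c) \<le> x \<bullet> z"
    using a_bound c_bound by (simp add: cos_add sin_arccos)
  show ?thesis
  proof (cases "arccos a + arccos c \<le> pi")
    case False
    then show ?thesis
      using arccos_ubound[of "x \<bullet> z"] xz_bound unfolding a_def c_def by linarith
  next
    case True
    have "arccos (x \<bullet> z) \<le> arccos (cos (arccos a + arccos c))"
      using inner_lower xz_bound by (intro arccos_le_arccos) auto
    also have "\<dots> = arccos a + arccos c"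
      using True a_bound c_bound arccos_lbound by (simp add: arccos_cos)
    finally show ?thesis unfolding a_def c_def .
  qed
qed

lemma sph_dist_commute: "sph_dist x y = sph_dist y x"
  unfolding sph_dist_def by (simp add: inner_commute)

lemma sph_dist_triangle:
  assumes "norm x = 1" and "norm y = 1" and "norm z = 1"
  shows "sph_dist x z \<le> sph_dist x y + sph_dist y z"
  unfolding sph_dist_def using arccos_inner_triangle assms .

lemma abs_sph_dist_diff_le:
  assumes "norm x = 1" and "norm y = 1" and "norm z = 1"
  shows "\<bar>sph_dist x y - sph_dist x z\<bar> \<le> sph_dist y z"
  using sph_dist_triangle[of x y z] sph_dist_triangle[of x z y] sph_dist_commute[of y z] assms
  by linarith

lemma orthogonal_matrix_inner:
  assumes "orthogonal_matrix Q"
  shows "(Q *v x) \<bullet> (Q *v y) = x \<bullet> (y::real^'n)"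
proof -
  have "orthogonal_transformation ((*v) Q)"
    using assms orthogonal_transformation_matrix[of "(*v) Q"]
    by simp
  then show ?thesis unfolding orthogonal_transformation_def by blast
qed

lemma norm_orthogonal_matrix_mult:
  assumes "orthogonal_matrix Q"
  shows "norm (Q *v x) = norm (x::real^'n)"
  using orthogonal_matrix_inner[OF assms, of x x] by (simp add: norm_eq_sqrt_inner)

lemma sph_dist_orthogonal_matrix:
  assumes "orthogonal_matrix Q"
  shows "sph_dist (Q *v x) (Q *v y) = sph_dist x y"
  unfolding sph_dist_def orthogonal_matrix_inner[OF assms] ..

lemma norm_p1: "norm (p1 \<rho>0) = 1"
  unfolding p1_def norm_eq_sqrt_inner inner_vec_def
  by (simp add: sum_3 power2_eq_square[symmetric])

lemma norm_p2: "norm (p2 \<rho>0) = 1"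
  unfolding p2_def norm_eq_sqrt_inner inner_vec_def
  by (simp add: sum_3 power2_eq_square[symmetric])

lemma sph_dist_p1_p2:
  assumes "0 \<le> \<rho>0" and "\<rho>0 \<le> pi / 2"
  shows "sph_dist (p1 \<rho>0) (p2 \<rho>0) = 2 * \<rho>0"
proof -
  have "p1 \<rho>0 \<bullet> p2 \<rho>0 = cos (2 * \<rho>0)"
    unfolding p1_def p2_def inner_vec_def
    by (simp add: sum_3 cos_double power2_eq_square)
  then show ?thesis unfolding sph_dist_def using assms by (simp add: arccos_cos)
qed

lemma Lbar_le_if_Dbar_less:
  assumes "0 < \<rho>0" and "Dbar \<rho>0 D < Lbar \<rho>0 L" and "\<bar>L' - D\<bar> \<le> 2 * \<rho>0"
  shows "Lbar \<rho>0 L' \<le> Lbar \<rho>0 L"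
proof -
  have "L' / (4 * \<rho>0) \<le> (D + 2 * \<rho>0) / (4 * \<rho>0)"
    using assms(1,3) by (intro divide_right_mono) auto
  also have "\<dots> = (D / (4 * \<rho>0) - 1/2) + 1"
    using assms(1) by (simp add: field_simps)
  finally have "L' / (4 * \<rho>0) \<le> (D / (4 * \<rho>0) - 1/2) + 1" .
  then have "\<lceil>L' / (4 * \<rho>0)\<rceil> \<le> \<lceil>D / (4 * \<rho>0) - 1/2\<rceil> + 1"
    by (metis ceiling_add_one ceiling_mono)
  moreover have "\<lceil>D / (4 * \<rho>0) - 1/2\<rceil> < \<lceil>L / (4 * \<rho>0)\<rceil>"
    using assms(2) unfolding Lbar_def Dbar_def by linarith
  ultimately show ?thesis unfolding Lbar_def by linarith
qed

lemma Dbar_le_if_Lbar_less: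
  assumes "0 < \<rho>0" and "Lbar \<rho>0 L < Dbar \<rho>0 D" and "\<bar>L - D'\<bar> \<le> 2 * \<rho>0"
  shows "Dbar \<rho>0 D' \<le> Dbar \<rho>0 D"
proof -
  have "D' / (4 * \<rho>0) - 1/2 = (D' - 2 * \<rho>0) / (4 * \<rho>0)"
    using assms(1) by (simp add: field_simps)
  also have "\<dots> \<le> L / (4 * \<rho>0)"
    using assms(1,3) by (intro divide_right_mono) auto
  finally have "D' / (4 * \<rho>0) - 1/2 \<le> L / (4 * \<rho>0)" .
  then have "\<lceil>D' / (4 * \<rho>0) - 1/2\<rceil> \<le> \<lceil>L / (4 * \<rho>0)\<rceil>"
    by (rule ceiling_mono)
  moreover have "\<lceil>L / (4 * \<rho>0)\<rceil> \<le> \<lceil>D / (4 * \<rho>0) - 1/2\<rceil>"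
    using assms(2) unfolding Lbar_def Dbar_def by linarith
  ultimately show ?thesis unfolding Dbar_def by linarith
qed

theorem mainTheorem3:
  fixes \<rho>0 :: real and Q :: "real^3^3"
  assumes "0 < \<rho>0" and "\<rho>0 < pi / 2" and "Q \<in> SO3"
  defines "L1 \<equiv> sph_dist (p1 \<rho>0) (Q *v p1 \<rho>0)"
      and "L2 \<equiv> sph_dist (p2 \<rho>0) (Q *v p2 \<rho>0)"
      and "D1 \<equiv> sph_dist (p1 \<rho>0) (Q *v p2 \<rho>0)"
      and "D2 \<equiv> sph_dist (p2 \<rho>0) (Q *v p1 \<rho>0)"
  shows "((\<forall>L\<in>{L1, L2}. \<forall>D\<in>{D1, D2}. Lbar \<rho>0 L > Dbar \<rho>0 D) \<longrightarrow> Lbar \<rho>0 L1 = Lbar \<rho>0 L2)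
       \<and> ((\<forall>D\<in>{D1, D2}. \<forall>L\<in>{L1, L2}. Dbar \<rho>0 D > Lbar \<rho>0 L) \<longrightarrow> Dbar \<rho>0 D1 = Dbar \<rho>0 D2)"
proof -
  have Q: "orthogonal_matrix Q" using assms(3) unfolding SO3_def by auto
  have unit: "norm (p1 \<rho>0) = 1" "norm (p2 \<rho>0) = 1"
    "norm (Q *v p1 \<rho>0) = 1" "norm (Q *v p2 \<rho>0) = 1"
    by (simp_all add: norm_p1 norm_p2 norm_orthogonal_matrix_mult[OF Q])
  have p: "sph_dist (p1 \<rho>0) (p2 \<rho>0) = 2 * \<rho>0"
    and q: "sph_dist (Q *v p1 \<rho>0) (Q *v p2 \<rho>0) = 2 * \<rho>0"
    using sph_dist_p1_p2 assms(1,2) by (simp_all add: sph_dist_orthogonal_matrix[OF Q])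
  have L1_D1: "\<bar>L1 - D1\<bar> \<le> 2 * \<rho>0"
    using abs_sph_dist_diff_le[OF unit(1,3,4)] q unfolding L1_def D1_def by simp
  have L2_D1: "\<bar>L2 - D1\<bar> \<le> 2 * \<rho>0"
    using abs_sph_dist_diff_le[OF unit(4,2,1)] p
      sph_dist_commute[of "Q *v p2 \<rho>0" "p2 \<rho>0"] sph_dist_commute[of "Q *v p2 \<rho>0" "p1 \<rho>0"]
      sph_dist_commute[of "p2 \<rho>0" "p1 \<rho>0"]
    unfolding L2_def D1_def by linarith
  have L1_D2: "\<bar>L1 - D2\<bar> \<le> 2 * \<rho>0"
    using abs_sph_dist_diff_le[OF unit(3,1,2)] p
      sph_dist_commute[of "Q *v p1 \<rho>0" "p1 \<rho>0"] sph_dist_commute[of "Q *v p1 \<rho>0" "p2 \<rho>0"]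
    unfolding L1_def D2_def by linarith
  note Lbar_le = Lbar_le_if_Dbar_less[OF assms(1)] and Dbar_le = Dbar_le_if_Lbar_less[OF assms(1)]
  have "Lbar \<rho>0 L1 = Lbar \<rho>0 L2" if "Dbar \<rho>0 D1 < Lbar \<rho>0 L1" "Dbar \<rho>0 D1 < Lbar \<rho>0 L2"
    using Lbar_le[of D1 L1 L2] Lbar_le[of D1 L2 L1] that L1_D1 L2_D1 by (metis order.antisym)
  moreover have "Dbar \<rho>0 D1 = Dbar \<rho>0 D2" if "Lbar \<rho>0 L1 < Dbar \<rho>0 D1" "Lbar \<rho>0 L1 < Dbar \<rho>0 D2"
    using Dbar_le[of L1 D1 D2] Dbar_le[of L1 D2 D1] that L1_D1 L1_D2 by (metis order.antisym)
  ultimately show ?thesis by blast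
qed

end
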